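(* Let $G$ be a graph with $n$ vertices and $m$ edges. Then $G$ is graceful if and only if $n\leqslant m+1$ and the vertices of $\widehat{G}$ can be arranged (ordered) in such a way that the adjacency matrix of $\widehat{G}$ becomes graceful.
   Context: Graphs are finite, simple and undirected. A graph $G=(V,E)$ with $m$ edges is graceful if there is an injective map $f:V\to\{0,1,\ldots,m\}$ such that the edge labels $|f(u)-f(v)|$, $uv\in E$, are pairwise distinct (such $f$ is a graceful labeling or $\beta$-labeling). If $G$ has $n\le m+1$ vertices, $\widehat{G}$ denotes the graph obtained from $G$ by adding $m+1-n$ isolated vertices. For a $p\times q$ matrix with rows indexed $1,\ldots,p$ and columns $1,\ldots,q$, the box-value of position $(i,j)$ is $p+j-i$, and for each $c=1,\ldots,p+q-1$ the set of positions with box-value $c$ is called a diagonal. A $0$-$1$ matrix is graceful if every diagonal contains at most one entry equal to $1$. *)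

theory Defs
  imports Main
begin

definition simple_graph :: "'a set \<Rightarrow> 'a set set \<Rightarrow> bool" where
  "simple_graph V E \<longleftrightarrow> finite V \<and>
     (\<forall>e\<in>E. \<exists>u v. u \<in> V \<and> v \<in> V \<and> u \<noteq> v \<and> e = {u, v})"

definition graceful_labeling :: "'a set \<Rightarrow> 'a set set \<Rightarrow> ('a \<Rightarrow> nat) \<Rightarrow> bool" where
  "graceful_labeling V E f \<longleftrightarrow> inj_on f V \<and> f ` V \<subseteq> {0..card E} \<and>
     (\<forall>u v u' v'. {u, v} \<in> E \<longrightarrow> {u', v'} \<in> E \<longrightarrow>
        \<bar>int (f u) - int (f v)\<bar> = \<bar>int (f u') - int (f v')\<bar> \<longrightarrow> {u, v} = {u', v'})"

definition graceful :: "'a set \<Rightarrow> 'a set set \<Rightarrow> bool" where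
  "graceful V E \<longleftrightarrow> (\<exists>f. graceful_labeling V E f)"

definition hat_vertices :: "'a set \<Rightarrow> 'a set set \<Rightarrow> ('a + nat) set" where
  "hat_vertices V E = Inl ` V \<union> Inr ` {..< card E + 1 - card V}"

definition hat_edges :: "'a set set \<Rightarrow> ('a + nat) set set" where
  "hat_edges E = (\<lambda>e. Inl ` e) ` E"

text \<open>Adjacency matrix w.r.t. the ordering sigma : {1..N} -> vertices (rows/columns 1..N).\<close>
definition adj_matrix :: "'b set set \<Rightarrow> (nat \<Rightarrow> 'b) \<Rightarrow> nat \<Rightarrow> nat \<Rightarrow> nat" where
  "adj_matrix E \<sigma> i j = (if {\<sigma> i, \<sigma> j} \<in> E then 1 else 0)"

text \<open>A p x q 0-1 matrix (positions 1..p, 1..q) is graceful if every diagonal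
  (positions of equal box-value p+j-i) contains at most one entry equal to 1.\<close>
definition box_value :: "nat \<Rightarrow> nat \<Rightarrow> nat \<Rightarrow> nat" where
  "box_value p i j = p + j - i"

definition graceful_matrix :: "nat \<Rightarrow> nat \<Rightarrow> (nat \<Rightarrow> nat \<Rightarrow> nat) \<Rightarrow> bool" where
  "graceful_matrix p q M \<longleftrightarrow>
     (\<forall>i j. 1 \<le> i \<and> i \<le> p \<and> 1 \<le> j \<and> j \<le> q \<longrightarrow> M i j \<in> {0, 1}) \<and>
     (\<forall>i j i' j'. 1 \<le> i \<and> i \<le> p \<and> 1 \<le> j \<and> j \<le> q \<and>
                  1 \<le> i' \<and> i' \<le> p \<and> 1 \<le> j' \<and> j' \<le> q \<and>
                  M i j = 1 \<and> M i' j' = 1 \<and> box_value p i j = box_value p i' j'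
                  \<longrightarrow> i = i' \<and> j = j')"

end

theory Submission
  imports Defs
begin

text \<open>Extend a graceful labeling \<open>f\<close> bijectively to the vertices of \<open>G-hat\<close>, the isolated
  vertices taking the unused labels, and put each vertex \<open>x\<close> in row and column \<open>f x + 1\<close>.
  An edge with labels \<open>a < b\<close> then contributes ones at \<open>(a+1, b+1)\<close> and \<open>(b+1, a+1)\<close>, on the
  diagonals with box-values \<open>m+1+(b-a)\<close> and \<open>m+1-(b-a)\<close>. So a diagonal records a signed edge
  label, and two ones share a diagonal exactly when two edges share a label. Conversely, the
  positions of the vertices in a graceful ordering, shifted down by one, form a graceful labeling.\<close>

definition distinct_edge_gaps :: "'a set set \<Rightarrow> ('a \<Rightarrow> nat) \<Rightarrow> bool" where
  "distinct_edge_gaps E f \<longleftrightarrow>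
     (\<forall>u v u' v'. {u, v} \<in> E \<longrightarrow> {u', v'} \<in> E \<longrightarrow>
        \<bar>int (f u) - int (f v)\<bar> = \<bar>int (f u') - int (f v')\<bar> \<longrightarrow> {u, v} = {u', v'})"

lemma graceful_labeling_iff:
  "graceful_labeling V E f \<longleftrightarrow> inj_on f V \<and> f ` V \<subseteq> {0..card E} \<and> distinct_edge_gaps E f"
  unfolding graceful_labeling_def distinct_edge_gaps_def ..

lemma distinct_edge_gaps_cong:
  assumes "\<And>v. v \<in> \<Union>E \<Longrightarrow> f v = g v"
  shows "distinct_edge_gaps E f \<longleftrightarrow> distinct_edge_gaps E g"
proof -
  have transfer: "distinct_edge_gaps E h'"
    if gaps: "distinct_edge_gaps E h" and eq: "\<And>v. v \<in> \<Union>E \<Longrightarrow> h v = h' v" for h h'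
    unfolding distinct_edge_gaps_def
  proof (intro allI impI)
    fix u v u' v'
    assume e: "{u, v} \<in> E" and e': "{u', v'} \<in> E"
      and "\<bar>int (h' u) - int (h' v)\<bar> = \<bar>int (h' u') - int (h' v')\<bar>"
    moreover have "h u = h' u" "h v = h' v" "h u' = h' u'" "h v' = h' v'"
      using e e' eq by blast+
    ultimately show "{u, v} = {u', v'}"
      using gaps[unfolded distinct_edge_gaps_def, rule_format, OF e e'] by simp
  qed
  show ?thesis
    using transfer[of f g] transfer[of g f] assms by auto
qed

lemma distinct_edge_gaps_shift:
  "distinct_edge_gaps E (\<lambda>v. f v + c) \<longleftrightarrow> distinct_edge_gaps E f"
  unfolding distinct_edge_gaps_def by simp

lemma hat_edge_iff: "{x, y} \<in> hat_edges E \<longleftrightarrow> (\<exists>u v. x = Inl u \<and> y = Inl v \<and> {u, v} \<in> E)"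
proof
  assume "{x, y} \<in> hat_edges E"
  then obtain e where e: "e \<in> E" "{x, y} = Inl ` e"
    unfolding hat_edges_def by blast
  then have "x \<in> Inl ` e" "y \<in> Inl ` e"
    by blast+
  then obtain u v where uv: "x = Inl u" "y = Inl v"
    by blast
  with e have "Inl ` e = Inl ` {u, v}"
    by auto
  then have "e = {u, v}"
    by (rule inj_image_eq_iff[OF inj_Inl, THEN iffD1])
  with e uv show "\<exists>u v. x = Inl u \<and> y = Inl v \<and> {u, v} \<in> E"
    by blast
next
  assume "\<exists>u v. x = Inl u \<and> y = Inl v \<and> {u, v} \<in> E"
  then obtain u v where "{x, y} = Inl ` {u, v}" "{u, v} \<in> E"
    by auto
  then show "{x, y} \<in> hat_edges E"
    unfolding hat_edges_def by blast
qed

lemma Inl_doubleton_eq_iff: "{Inl u, Inl v} = {Inl u', Inl v'} \<longleftrightarrow> {u, v} = {u', v'}"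
  by (auto simp: doubleton_eq_iff)

lemma distinct_edge_gaps_hat_edges:
  "distinct_edge_gaps (hat_edges E) g \<longleftrightarrow> distinct_edge_gaps E (g \<circ> Inl)"
proof
  assume gaps: "distinct_edge_gaps (hat_edges E) g"
  show "distinct_edge_gaps E (g \<circ> Inl)"
    unfolding distinct_edge_gaps_def
  proof (intro allI impI)
    fix u v u' v'
    assume "{u, v} \<in> E" "{u', v'} \<in> E"
      and gap: "\<bar>int ((g \<circ> Inl) u) - int ((g \<circ> Inl) v)\<bar> = \<bar>int ((g \<circ> Inl) u') - int ((g \<circ> Inl) v')\<bar>"
    then have "{Inl u, Inl v} \<in> hat_edges E" "{Inl u', Inl v'} \<in> hat_edges E"
      unfolding hat_edge_iff by blast+
    moreover have "\<bar>int (g (Inl u)) - int (g (Inl v))\<bar> = \<bar>int (g (Inl u')) - int (g (Inl v'))\<bar>"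
      using gap by simp
    ultimately have "{Inl u, Inl v} = {Inl u', Inl v'}"
      using gaps unfolding distinct_edge_gaps_def by blast
    then show "{u, v} = {u', v'}"
      by (simp only: Inl_doubleton_eq_iff)
  qed
next
  assume gaps: "distinct_edge_gaps E (g \<circ> Inl)"
  show "distinct_edge_gaps (hat_edges E) g"
    unfolding distinct_edge_gaps_def
  proof (intro allI impI)
    fix x y x' y'
    assume e: "{x, y} \<in> hat_edges E" and e': "{x', y'} \<in> hat_edges E"
      and gap: "\<bar>int (g x) - int (g y)\<bar> = \<bar>int (g x') - int (g y')\<bar>"
    obtain u v u' v' where uv: "x = Inl u" "y = Inl v" "{u, v} \<in> E"
      and uv': "x' = Inl u'" "y' = Inl v'" "{u', v'} \<in> E"
      using e e' unfolding hat_edge_iff by blast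
    from gaps[unfolded distinct_edge_gaps_def, rule_format, OF uv(3) uv'(3)] gap uv uv'
    have "{u, v} = {u', v'}"
      by simp
    with uv uv' show "{x, y} = {x', y'}"
      by (simp add: Inl_doubleton_eq_iff)
  qed
qed

lemma simple_graph_edgeD:
  assumes "simple_graph V E" "{u, v} \<in> E"
  shows "u \<in> V" "v \<in> V" "u \<noteq> v"
proof -
  obtain a b where "a \<in> V" "b \<in> V" "a \<noteq> b" "{u, v} = {a, b}"
    using assms unfolding simple_graph_def by blast
  then show "u \<in> V" "v \<in> V" "u \<noteq> v"
    by (auto simp: doubleton_eq_iff)
qed

lemma simple_graph_Union_subset:
  assumes "simple_graph V E"
  shows "\<Union>E \<subseteq> V"
proof
  fix x assume "x \<in> \<Union>E"
  then obtain e where "x \<in> e" "e \<in> E"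
    by blast
  moreover from \<open>e \<in> E\<close> obtain u v where "u \<in> V" "v \<in> V" "e = {u, v}"
    using assms unfolding simple_graph_def by blast
  ultimately show "x \<in> V"
    by blast
qed

lemma simple_graph_hat:
  assumes "simple_graph V E"
  shows "simple_graph (hat_vertices V E) (hat_edges E)"
  unfolding simple_graph_def
proof
  show "finite (hat_vertices V E)"
    using assms unfolding simple_graph_def hat_vertices_def by simp
  show "\<forall>e\<in>hat_edges E. \<exists>x y. x \<in> hat_vertices V E \<and> y \<in> hat_vertices V E \<and> x \<noteq> y \<and> e = {x, y}"
  proof
    fix e assume "e \<in> hat_edges E"
    then obtain u v where "u \<in> V" "v \<in> V" "u \<noteq> v" "e = {Inl u, Inl v}"
      using assms unfolding hat_edges_def simple_graph_def by force
    then show "\<exists>x y. x \<in> hat_vertices V E \<and> y \<in> hat_vertices V E \<and> x \<noteq> y \<and> e = {x, y}"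
      unfolding hat_vertices_def by blast
  qed
qed

lemma box_value_eq_iff:
  assumes "i \<le> p" "i' \<le> p"
  shows "box_value p i j = box_value p i' j' \<longleftrightarrow> int j - int i = int j' - int i'"
  using assms unfolding box_value_def by auto

definition adjacent_diagonals_distinct :: "nat \<Rightarrow> 'b set set \<Rightarrow> (nat \<Rightarrow> 'b) \<Rightarrow> bool" where
  "adjacent_diagonals_distinct N F \<sigma> \<longleftrightarrow>
     (\<forall>i\<in>{1..N}. \<forall>j\<in>{1..N}. \<forall>i'\<in>{1..N}. \<forall>j'\<in>{1..N}.
        {\<sigma> i, \<sigma> j} \<in> F \<longrightarrow> {\<sigma> i', \<sigma> j'} \<in> F \<longrightarrow> int j - int i = int j' - int i' \<longrightarrow>
        i = i' \<and> j = j')"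

lemma graceful_matrix_adj_matrix:
  "graceful_matrix N N (adj_matrix F \<sigma>) \<longleftrightarrow> adjacent_diagonals_distinct N F \<sigma>"
proof
  assume "graceful_matrix N N (adj_matrix F \<sigma>)"
  then have gm: "i = i' \<and> j = j'"
    if "1 \<le> i \<and> i \<le> N \<and> 1 \<le> j \<and> j \<le> N \<and> 1 \<le> i' \<and> i' \<le> N \<and> 1 \<le> j' \<and> j' \<le> N \<and>
        adj_matrix F \<sigma> i j = 1 \<and> adj_matrix F \<sigma> i' j' = 1 \<and> box_value N i j = box_value N i' j'"
    for i j i' j'
    using that unfolding graceful_matrix_def by blast
  show "adjacent_diagonals_distinct N F \<sigma>"
    unfolding adjacent_diagonals_distinct_def
  proof (intro ballI impI)
    fix i j i' j'
    assume "i \<in> {1..N}" "j \<in> {1..N}" "i' \<in> {1..N}" "j' \<in> {1..N}"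
      and "{\<sigma> i, \<sigma> j} \<in> F" "{\<sigma> i', \<sigma> j'} \<in> F" "int j - int i = int j' - int i'"
    then show "i = i' \<and> j = j'"
      using box_value_eq_iff[of i N i' j j'] by (intro gm) (simp add: adj_matrix_def)
  qed
next
  assume diagonals: "adjacent_diagonals_distinct N F \<sigma>"
  show "graceful_matrix N N (adj_matrix F \<sigma>)"
    unfolding graceful_matrix_def
  proof (rule conjI; intro allI impI)
    fix i j i' j'
    assume "1 \<le> i \<and> i \<le> N \<and> 1 \<le> j \<and> j \<le> N \<and> 1 \<le> i' \<and> i' \<le> N \<and> 1 \<le> j' \<and> j' \<le> N \<and>
        adj_matrix F \<sigma> i j = 1 \<and> adj_matrix F \<sigma> i' j' = 1 \<and> box_value N i j = box_value N i' j'"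
    moreover from this have "int j - int i = int j' - int i'"
      using box_value_eq_iff[of i N i' j j'] by simp
    ultimately show "i = i' \<and> j = j'"
      by (intro diagonals[unfolded adjacent_diagonals_distinct_def, rule_format])
        (auto simp: adj_matrix_def split: if_splits)
  qed (simp add: adj_matrix_def)
qed

lemma distinct_edge_gaps_if_adjacent_diagonals_distinct:
  assumes G: "simple_graph W F"
    and \<sigma>: "bij_betw \<sigma> {1..N} W"
    and \<rho>: "\<And>i. i \<in> {1..N} \<Longrightarrow> \<rho> (\<sigma> i) = i"
    and diagonals: "adjacent_diagonals_distinct N F \<sigma>"
  shows "distinct_edge_gaps F \<rho>"
  unfolding distinct_edge_gaps_def
proof (intro allI impI)
  have position: "\<rho> x \<in> {1..N}" "\<sigma> (\<rho> x) = x" if x: "x \<in> W" for x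
  proof -
    obtain i where "i \<in> {1..N}" "x = \<sigma> i"
      using \<sigma> x unfolding bij_betw_def by blast
    then show "\<rho> x \<in> {1..N}" "\<sigma> (\<rho> x) = x"
      using \<rho> by simp_all
  qed
  fix u v u' v'
  assume e: "{u, v} \<in> F" and e': "{u', v'} \<in> F"
    and gap: "\<bar>int (\<rho> u) - int (\<rho> v)\<bar> = \<bar>int (\<rho> u') - int (\<rho> v')\<bar>"
  have W: "u \<in> W" "v \<in> W" "u' \<in> W" "v' \<in> W"
    using simple_graph_edgeD[OF G e] simple_graph_edgeD[OF G e'] by simp_all
  have edges: "{\<sigma> (\<rho> u), \<sigma> (\<rho> v)} \<in> F" "{\<sigma> (\<rho> u'), \<sigma> (\<rho> v')} \<in> F"
    "{\<sigma> (\<rho> v'), \<sigma> (\<rho> u')} \<in> F"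
    using e e' position(2)[OF W(1)] position(2)[OF W(2)] position(2)[OF W(3)] position(2)[OF W(4)]
    by (simp_all add: insert_commute)
  note diagonal = diagonals[unfolded adjacent_diagonals_distinct_def, rule_format,
      OF position(1)[OF W(1)] position(1)[OF W(2)]]
  from gap consider "int (\<rho> v) - int (\<rho> u) = int (\<rho> v') - int (\<rho> u')"
    | "int (\<rho> v) - int (\<rho> u) = int (\<rho> u') - int (\<rho> v')"
    by linarith
  then show "{u, v} = {u', v'}"
  proof cases
    case 1
    with diagonal[OF position(1)[OF W(3)] position(1)[OF W(4)] edges(1,2)]
    have "\<sigma> (\<rho> u) = \<sigma> (\<rho> u') \<and> \<sigma> (\<rho> v) = \<sigma> (\<rho> v')"
      by simp
    then show ?thesis
      using position(2) W by simp
  next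
    case 2
    with diagonal[OF position(1)[OF W(4)] position(1)[OF W(3)] edges(1,3)]
    have "\<sigma> (\<rho> u) = \<sigma> (\<rho> v') \<and> \<sigma> (\<rho> v) = \<sigma> (\<rho> u')"
      by simp
    then show ?thesis
      using position(2) W by auto
  qed
qed

lemma adjacent_diagonals_distinct_if_distinct_edge_gaps:
  assumes G: "simple_graph W F"
    and \<sigma>: "inj_on \<sigma> {1..N}"
    and \<rho>: "\<And>i. i \<in> {1..N} \<Longrightarrow> \<rho> (\<sigma> i) = i"
    and gaps: "distinct_edge_gaps F \<rho>"
  shows "adjacent_diagonals_distinct N F \<sigma>"
  unfolding adjacent_diagonals_distinct_def
proof (intro ballI impI)
  fix i j i' j'
  assume ij: "i \<in> {1..N}" "j \<in> {1..N}" "i' \<in> {1..N}" "j' \<in> {1..N}"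
    and e: "{\<sigma> i, \<sigma> j} \<in> F" and e': "{\<sigma> i', \<sigma> j'} \<in> F"
    and diag: "int j - int i = int j' - int i'"
  have "\<bar>int (\<rho> (\<sigma> i)) - int (\<rho> (\<sigma> j))\<bar> = \<bar>int (\<rho> (\<sigma> i')) - int (\<rho> (\<sigma> j'))\<bar>"
    using diag ij \<rho> by simp
  then have "{\<sigma> i, \<sigma> j} = {\<sigma> i', \<sigma> j'}"
    using gaps e e' unfolding distinct_edge_gaps_def by blast
  then consider "i = i' \<and> j = j'" | "i = j' \<and> j = i'"
    using \<sigma> ij unfolding doubleton_eq_iff inj_on_def by blast
  then show "i = i' \<and> j = j'"
  proof cases
    case 2
    \<comment> \<open>mirror-image ones on a common diagonal can only sit on the main diagonal, i.e. form a loop\<close>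
    then have "i = j"
      using diag by linarith
    then show ?thesis
      using simple_graph_edgeD(3)[OF G e] by simp
  qed
qed

lemma graceful_matrix_adj_matrix_iff:
  assumes "simple_graph W F"
    and \<sigma>: "bij_betw \<sigma> {1..N} W"
    and "\<And>i. i \<in> {1..N} \<Longrightarrow> \<rho> (\<sigma> i) = i"
  shows "graceful_matrix N N (adj_matrix F \<sigma>) \<longleftrightarrow> distinct_edge_gaps F \<rho>"
  unfolding graceful_matrix_adj_matrix
  using distinct_edge_gaps_if_adjacent_diagonals_distinct[OF assms]
    adjacent_diagonals_distinct_if_distinct_edge_gaps[OF assms(1) bij_betw_imp_inj_on[OF \<sigma>] assms(3)]
  by blast

lemma ex_graceful_ordering_iff:
  assumes "simple_graph W F"
  shows "(\<exists>\<sigma>. bij_betw \<sigma> {1..N} W \<and> graceful_matrix N N (adj_matrix F \<sigma>)) \<longleftrightarrow>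
         (\<exists>\<rho>. bij_betw \<rho> W {1..N} \<and> distinct_edge_gaps F \<rho>)"
proof
  assume "\<exists>\<sigma>. bij_betw \<sigma> {1..N} W \<and> graceful_matrix N N (adj_matrix F \<sigma>)"
  then obtain \<sigma> where \<sigma>: "bij_betw \<sigma> {1..N} W" and gm: "graceful_matrix N N (adj_matrix F \<sigma>)"
    by blast
  define \<rho> where "\<rho> = the_inv_into {1..N} \<sigma>"
  have "bij_betw \<rho> W {1..N}"
    unfolding \<rho>_def using \<sigma> by (rule bij_betw_the_inv_into)
  moreover have "\<And>i. i \<in> {1..N} \<Longrightarrow> \<rho> (\<sigma> i) = i"
    unfolding \<rho>_def using \<sigma> by (simp add: bij_betw_def the_inv_into_f_f)
  then have "distinct_edge_gaps F \<rho>"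
    using gm graceful_matrix_adj_matrix_iff[OF assms \<sigma>] by blast
  ultimately show "\<exists>\<rho>. bij_betw \<rho> W {1..N} \<and> distinct_edge_gaps F \<rho>"
    by blast
next
  assume "\<exists>\<rho>. bij_betw \<rho> W {1..N} \<and> distinct_edge_gaps F \<rho>"
  then obtain \<rho> where \<rho>: "bij_betw \<rho> W {1..N}" and gaps: "distinct_edge_gaps F \<rho>"
    by blast
  define \<sigma> where "\<sigma> = the_inv_into W \<rho>"
  have \<sigma>: "bij_betw \<sigma> {1..N} W"
    unfolding \<sigma>_def using \<rho> by (rule bij_betw_the_inv_into)
  have "\<And>i. i \<in> {1..N} \<Longrightarrow> \<rho> (\<sigma> i) = i"
    unfolding \<sigma>_def using \<rho> by (rule f_the_inv_into_f_bij_betw)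
  then have "graceful_matrix N N (adj_matrix F \<sigma>)"
    using gaps graceful_matrix_adj_matrix_iff[OF assms \<sigma>] by blast
  with \<sigma> show "\<exists>\<sigma>. bij_betw \<sigma> {1..N} W \<and> graceful_matrix N N (adj_matrix F \<sigma>)"
    by blast
qed

lemma inj_on_extend_bij_betw_Plus:
  assumes B: "finite B" and inj: "inj_on f A" and f: "f ` A \<subseteq> B"
    and K: "finite K" "card K = card B - card A"
  shows "\<exists>g. bij_betw g (Inl ` A \<union> Inr ` K) B \<and> (\<forall>a\<in>A. g (Inl a) = f a)"
proof -
  have "card (B - f ` A) = card K"
    using K(2) card_Diff_subset[OF finite_subset[OF f B] f] card_image[OF inj] by simp
  then obtain h where h: "bij_betw h K (B - f ` A)"
    using finite_same_card_bij[OF K(1) finite_Diff[OF B]] by metis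
  define g where "g x = (case x of Inl a \<Rightarrow> f a | Inr k \<Rightarrow> h k)" for x
  have "g \<circ> Inl = f" "g \<circ> Inr = h"
    by (simp_all add: g_def fun_eq_iff)
  then have "bij_betw g (Inl ` A) (f ` A)" "bij_betw g (Inr ` K) (B - f ` A)"
    using inj h comp_inj_on_iff[OF inj_on_subset[OF inj_Inl subset_UNIV], of g]
      comp_inj_on_iff[OF inj_on_subset[OF inj_Inr subset_UNIV], of g]
    unfolding bij_betw_def by (simp_all add: image_comp)
  then have "bij_betw g (Inl ` A \<union> Inr ` K) (f ` A \<union> (B - f ` A))"
    by (rule bij_betw_combine) blast
  moreover have "f ` A \<union> (B - f ` A) = B"
    using f by blast
  ultimately show ?thesis
    unfolding g_def by auto
qed

lemma hat_labeling_if_graceful_labeling: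
  assumes G: "simple_graph V E" and f: "graceful_labeling V E f"
  shows "\<exists>\<rho>. bij_betw \<rho> (hat_vertices V E) {1..card E + 1} \<and> distinct_edge_gaps (hat_edges E) \<rho>"
proof -
  have inj: "inj_on f V" and range: "f ` V \<subseteq> {0..card E}" and gaps: "distinct_edge_gaps E f"
    using f unfolding graceful_labeling_iff by blast+
  obtain g where g: "bij_betw g (hat_vertices V E) {0..card E}" and g_ext: "\<forall>v\<in>V. g (Inl v) = f v"
    using inj_on_extend_bij_betw_Plus[OF _ inj range, of "{..<card E + 1 - card V}"]
    unfolding hat_vertices_def by auto
  have shift: "bij_betw Suc {0..card E} {1..card E + 1}"
    by (simp add: bij_betw_def image_Suc_atLeastAtMost)
  have "bij_betw (\<lambda>x. g x + 1) (hat_vertices V E) {1..card E + 1}"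
    using bij_betw_trans[OF g shift] by (simp add: comp_def)
  moreover have "distinct_edge_gaps E (\<lambda>v. g (Inl v))"
    using gaps distinct_edge_gaps_cong[of E "\<lambda>v. g (Inl v)" f] g_ext simple_graph_Union_subset[OF G]
    by auto
  then have "distinct_edge_gaps E (\<lambda>v. g (Inl v) + 1)"
    by (simp only: distinct_edge_gaps_shift)
  then have "distinct_edge_gaps (hat_edges E) (\<lambda>x. g x + 1)"
    by (simp only: distinct_edge_gaps_hat_edges comp_def)
  ultimately show ?thesis
    by blast
qed

lemma graceful_labeling_of_hat_labeling:
  assumes G: "simple_graph V E"
    and \<rho>: "bij_betw \<rho> (hat_vertices V E) {1..card E + 1}"
    and gaps: "distinct_edge_gaps (hat_edges E) \<rho>"
  shows "graceful_labeling V E (\<lambda>v. \<rho> (Inl v) - 1)"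
proof -
  define f where "f v = \<rho> (Inl v) - 1" for v
  have Inl_V: "Inl ` V \<subseteq> hat_vertices V E"
    unfolding hat_vertices_def by blast
  then have \<rho>_Inl: "\<rho> (Inl v) = f v + 1" "f v \<le> card E" if "v \<in> V" for v
    using \<rho> that unfolding f_def bij_betw_def by force+
  have "inj_on (\<rho> \<circ> Inl) V"
    using \<rho> Inl_V by (auto simp: bij_betw_def intro: comp_inj_on inj_on_subset)
  then have "inj_on f V"
    by (simp add: inj_on_def \<rho>_Inl)
  moreover have "distinct_edge_gaps E (\<lambda>v. f v + 1)"
    using gaps distinct_edge_gaps_cong[of E "\<rho> \<circ> Inl" "\<lambda>v. f v + 1"] \<rho>_Inl
      simple_graph_Union_subset[OF G]
    by (auto simp: distinct_edge_gaps_hat_edges)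
  then have "distinct_edge_gaps E f"
    by (simp only: distinct_edge_gaps_shift)
  ultimately have "graceful_labeling V E f"
    unfolding graceful_labeling_iff using \<rho>_Inl(2) by auto
  then show ?thesis
    unfolding f_def .
qed

lemma graceful_iff_hat_labeling:
  assumes "simple_graph V E"
  shows "graceful V E \<longleftrightarrow> card V \<le> card E + 1 \<and>
           (\<exists>\<rho>. bij_betw \<rho> (hat_vertices V E) {1..card E + 1} \<and> distinct_edge_gaps (hat_edges E) \<rho>)"
proof
  assume "graceful V E"
  then obtain f where f: "graceful_labeling V E f"
    unfolding graceful_def by blast
  then have "card V \<le> card E + 1"
    using card_inj_on_le[of f V "{0..card E}"] unfolding graceful_labeling_def by simp
  with hat_labeling_if_graceful_labeling[OF assms f]
  show "card V \<le> card E + 1 \<and>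
      (\<exists>\<rho>. bij_betw \<rho> (hat_vertices V E) {1..card E + 1} \<and> distinct_edge_gaps (hat_edges E) \<rho>)"
    by blast
next
  assume "card V \<le> card E + 1 \<and>
      (\<exists>\<rho>. bij_betw \<rho> (hat_vertices V E) {1..card E + 1} \<and> distinct_edge_gaps (hat_edges E) \<rho>)"
  then show "graceful V E"
    unfolding graceful_def using graceful_labeling_of_hat_labeling[OF assms] by blast
qed

theorem theorem2p3:
  fixes V :: "'a set" and E :: "'a set set"
  assumes "simple_graph V E"
  shows "graceful V E \<longleftrightarrow>
           card V \<le> card E + 1 \<and>
           (\<exists>\<sigma>. bij_betw \<sigma> {1..card E + 1} (hat_vertices V E) \<and>
                 graceful_matrix (card E + 1) (card E + 1) (adj_matrix (hat_edges E) \<sigma>))"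
  using graceful_iff_hat_labeling[OF assms] ex_graceful_ordering_iff[OF simple_graph_hat[OF assms]]
  by simp

end
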